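(* Assume $T_1\ge1$, $\eta_1\le\frac{1}{4k(T_1+1)}$, $0<r\le\frac{\eta_1}{200}$, and suppose that $\frac{k}{4d}\le|\mathcal{W}_0^+\cap\mathcal{A}^+|,\,|\mathcal{W}_0^-\cap\mathcal{A}^-|\le\frac{k}{d}$ and $|S_1^+|,|S_1^-|\ge\frac{m_1}{3}$. Define $z(x)\in\mathbb{R}^k$ by $z(x)_i=\max_j\sigma(w_i^{(T_1)}\cdot x[j])$, and define $v^*\in\mathbb{R}^k$ by $v^*_i=\frac{80d}{k\eta_1T_1}$ for $i\in\mathcal{W}_0^+\cap\mathcal{A}^+$, $v^*_i=-\frac{80d}{k\eta_1T_1}$ for $i\in\mathcal{W}_0^-\cap\mathcal{A}^-$, and $v^*_i=0$ otherwise. Then $y\,(v^*\cdot z(x))>1$ for every $(x,y)$ in the support of $\mathcal{D}$, and $\|v^*\|^2\le\frac{2\cdot 80^2\,d}{k\,\eta_1^2T_1^2}$.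
   Context: Fix $n\ge1$, $d\ge3$ and orthonormal $o_1,\dots,o_d\in\mathbb{R}^d$. Inputs are $x=(x[1],\dots,x[n])\in\mathbb{R}^{nd}$. The distribution $\mathcal{D}$ on $\mathbb{R}^{nd}\times\{\pm1\}$: $y$ uniform on $\{\pm1\}$; given $y=1$, an index $j_+$ uniform on $\{1,\dots,n\}$ is drawn, $x[j_+]=o_1$, and for $j\ne j_+$ independently $x[j]=o_{i_j}$ with $i_j$ uniform on $\{3,\dots,d\}$; given $y=-1$, the same with $o_2$ instead of $o_1$. Network $N_{(W,a)}(x)=\sum_{i=1}^k a_i\max_j\sigma(w_i\cdot x[j])$, $\sigma(z)=\max\{0,z\}$. Loss $\ell(z)=\log(1+e^{-z})$. $S_1$ is a finite set of $m_1$ samples from $\mathcal{D}$, $S_1^\pm=\{x:(x,\pm1)\in S_1\}$, $\mathcal{L}_1(W,a)=\frac1{m_1}\sum_{(x,y)\in S_1}\ell(yN_{(W,a)}(x))$. Initialization: $\|w_i^{(0)}\|=r$, $a_i^{(0)}\in\{\pm1\}$. Iterates $W^{(t)}=W^{(t-1)}-\eta_1\nabla_W\mathcal{L}_1(W^{(t-1)},a^{(0)})$, $t=1,\dots,T_1$, with gradient convention $\frac{\partial}{\partial w_i}\max_j\sigma(w_i\cdot x[j])=p_i(x)$, where $p_i(x)=x[j^*]$ for $j^*\in\arg\max_j w_i\cdot x[j]$ if $w_i\cdot x[j^*]>0$ and $0$ otherwise; $w_i^{(t)}$ is the $i$th row of $W^{(t)}$. Sets: $\mathcal{A}^\pm=\{i:a_i^{(0)}=\pm1\}$,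 $\mathcal{W}_0^+=\{i:\arg\max_{l\in\{1,3,\dots,d\}}w_i^{(0)}\cdot o_l=1,\ w_i^{(0)}\cdot o_1>0\}$, $\mathcal{W}_0^-=\{i:\arg\max_{l\in\{2,3,\dots,d\}}w_i^{(0)}\cdot o_l=2,\ w_i^{(0)}\cdot o_2>0\}$. *)

theory Defs
  imports "HOL-Analysis.Analysis"
begin

text \<open>Patches of an input are indexed by a finite type 'n (so n = CARD('n) >= 1);
  R^d is an abstract Euclidean space 'a with DIM('a) = d; neurons are indexed by 1..k.\<close>

definition relu :: "real \<Rightarrow> real" where
  "relu z = max 0 z"

definition logloss :: "real \<Rightarrow> real" where
  "logloss z = ln (1 + exp (- z))"

definition logloss' :: "real \<Rightarrow> real" where
  "logloss' z = - exp (- z) / (1 + exp (- z))"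

definition neuron :: "'a::real_inner \<Rightarrow> ('n::finite \<Rightarrow> 'a) \<Rightarrow> real" where
  "neuron w x = Max (range (\<lambda>j. relu (w \<bullet> x j)))"

definition net :: "nat \<Rightarrow> (nat \<Rightarrow> 'a::real_inner) \<Rightarrow> (nat \<Rightarrow> real) \<Rightarrow> ('n::finite \<Rightarrow> 'a) \<Rightarrow> real" where
  "net k W a x = (\<Sum>i\<in>{1..k}. a i * neuron (W i) x)"

definition loss1 :: "nat \<Rightarrow> (('n::finite \<Rightarrow> 'a::real_inner) \<times> real) set \<Rightarrow> (nat \<Rightarrow> 'a) \<Rightarrow> (nat \<Rightarrow> real) \<Rightarrow> real" where
  "loss1 k S W a = (1 / real (card S)) * (\<Sum>(x, y)\<in>S. logloss (y * net k W a x))"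

text \<open>Gradient convention: p_i(x) = x[j*] for the selected maximizer j* = sel w x, if
  w . x[j*] > 0, and 0 otherwise.  The selection function sel is an arbitrary tie-breaking rule.\<close>
definition pgrad :: "('a::real_inner \<Rightarrow> ('n::finite \<Rightarrow> 'a) \<Rightarrow> 'n) \<Rightarrow> 'a \<Rightarrow> ('n \<Rightarrow> 'a) \<Rightarrow> 'a" where
  "pgrad sel w x = (if w \<bullet> x (sel w x) > 0 then x (sel w x) else 0)"

definition grad1 :: "('a::real_inner \<Rightarrow> ('n::finite \<Rightarrow> 'a) \<Rightarrow> 'n) \<Rightarrow> nat \<Rightarrow> (('n \<Rightarrow> 'a) \<times> real) set
    \<Rightarrow> (nat \<Rightarrow> 'a) \<Rightarrow> (nat \<Rightarrow> real) \<Rightarrow> nat \<Rightarrow> 'a" where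
  "grad1 sel k S W a i = (1 / real (card S)) *\<^sub>R
      (\<Sum>(x, y)\<in>S. (logloss' (y * net k W a x) * y * a i) *\<^sub>R pgrad sel (W i) x)"

fun gd :: "('a::real_inner \<Rightarrow> ('n::finite \<Rightarrow> 'a) \<Rightarrow> 'n) \<Rightarrow> nat \<Rightarrow> (('n \<Rightarrow> 'a) \<times> real) set
    \<Rightarrow> real \<Rightarrow> (nat \<Rightarrow> 'a) \<Rightarrow> (nat \<Rightarrow> real) \<Rightarrow> nat \<Rightarrow> (nat \<Rightarrow> 'a)" where
  "gd sel k S eta W0 a 0 = W0"
| "gd sel k S eta W0 a (Suc t) =
     (\<lambda>i. gd sel k S eta W0 a t i - eta *\<^sub>R grad1 sel k S (gd sel k S eta W0 a t) a i)"

definition supportD :: "(nat \<Rightarrow> 'a) \<Rightarrow> nat \<Rightarrow> (('n \<Rightarrow> 'a) \<times> real) set" where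
  "supportD ob d = {(x, y).
     (y = 1 \<and> (\<exists>jp. x jp = ob 1 \<and> (\<forall>j. j \<noteq> jp \<longrightarrow> x j \<in> ob ` {3..d}))) \<or>
     (y = -1 \<and> (\<exists>jp. x jp = ob 2 \<and> (\<forall>j. j \<noteq> jp \<longrightarrow> x j \<in> ob ` {3..d})))}"

definition Aset :: "nat \<Rightarrow> (nat \<Rightarrow> real) \<Rightarrow> real \<Rightarrow> nat set" where
  "Aset k a s = {i\<in>{1..k}. a i = s}"

text \<open>W_0^+ (with c = 1) and W_0^- (with c = 2): argmax over l in {c,3,...,d} of w_i . o_l is
  (uniquely) c, and w_i . o_c > 0.\<close>
definition W0set :: "nat \<Rightarrow> (nat \<Rightarrow> 'a::real_inner) \<Rightarrow> nat \<Rightarrow> (nat \<Rightarrow> 'a) \<Rightarrow> nat \<Rightarrow> nat set" where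
  "W0set k W d ob c = {i\<in>{1..k}. (\<forall>l\<in>{3..d}. W i \<bullet> ob l < W i \<bullet> ob c) \<and> W i \<bullet> ob c > 0}"

definition vstar :: "nat \<Rightarrow> nat \<Rightarrow> real \<Rightarrow> nat \<Rightarrow> nat set \<Rightarrow> nat set \<Rightarrow> nat \<Rightarrow> real" where
  "vstar k d eta T Iplus Iminus i =
     (if i \<in> Iplus then 80 * d / (k * eta * T) else if i \<in> Iminus then - (80 * d / (k * eta * T)) else 0)"

end

theory Submission
  imports Defs
begin

text \<open>
  As long as all weights have norm at most \<open>r + \<eta>\<^sub>1 T\<^sub>1\<close>, the network output is at most
  \<open>k (r + \<eta>\<^sub>1 T\<^sub>1) \<le> 1/4\<close> in absolute value, so every example contributes a loss derivative of
  size at least \<open>1/4\<close>. A neuron of \<open>\<W>\<^sub>0\<^sup>+ \<inter> \<A>\<^sup>+\<close> therefore keeps selecting the \<open>o\<^sub>1\<close> patch of every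
  positive example, and since a third of the examples are positive its \<open>o\<^sub>1\<close>-component grows by at
  least \<open>\<eta>\<^sub>1/12\<close> per step; the negative examples only subtract nonnegative combinations of the
  \<open>o\<^sub>l\<close>, so no other component ever grows. After \<open>T\<^sub>1\<close> steps the neuron fires at least
  \<open>\<eta>\<^sub>1 T\<^sub>1/12\<close> on positive inputs and at most \<open>r\<close> on negative ones, and symmetrically for
  \<open>\<W>\<^sub>0\<^sup>- \<inter> \<A>\<^sup>-\<close>. With at least \<open>k/(4d)\<close> and at most \<open>k/d\<close> such neurons on each side the margin is
  at least \<open>5/3 - 2/5 > 1\<close>.
\<close>

section \<open>Loss derivative, neurons and gradient steps\<close>

lemma logloss'_nonpos: "logloss' z \<le> 0"
  unfolding logloss'_def by (simp add: add_pos_pos less_imp_le)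

lemma abs_logloss'_le_one: "\<bar>logloss' z\<bar> \<le> 1"
proof -
  have "0 < 1 + exp (- z)" by (simp add: add_pos_pos)
  then show ?thesis unfolding logloss'_def by (simp add: abs_div_pos divide_le_eq)
qed

lemma logloss'_le_neg_quarter:
  assumes "z \<le> 1/4" shows "logloss' z \<le> - 1/4"
proof -
  have "1 - z \<le> exp (- z)" using exp_ge_add_one_self[of "- z"] by simp
  then have "1 \<le> 3 * exp (- z)" using assms by linarith
  moreover have "0 < 1 + exp (- z)" by (simp add: add_pos_pos)
  ultimately show ?thesis unfolding logloss'_def by (simp add: divide_simps)
qed

lemma relu_le_neuron: "relu (w \<bullet> x j) \<le> neuron w x"
  unfolding neuron_def by (rule Max_ge) auto

lemma neuron_le: "(\<And>j. relu (w \<bullet> x j) \<le> B) \<Longrightarrow> neuron w x \<le> B"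
  unfolding neuron_def by (subst Max_le_iff) auto

lemma neuron_nonneg: "0 \<le> neuron w x"
  using relu_le_neuron[of w x undefined] unfolding relu_def by linarith

lemma neuron_le_norm:
  assumes "\<And>j. norm (x j) \<le> 1" shows "neuron w x \<le> norm w"
proof (rule neuron_le)
  fix j
  have "w \<bullet> x j \<le> norm w * norm (x j)" by (rule norm_cauchy_schwarz)
  also have "\<dots> \<le> norm w" using assms[of j] by (simp add: mult_left_le)
  finally show "relu (w \<bullet> x j) \<le> norm w" unfolding relu_def by simp
qed

lemma pgrad_cases: "pgrad sel w x = 0 \<or> pgrad sel w x \<in> range x"
  unfolding pgrad_def by auto

lemma norm_pgrad_le: "(\<And>j. norm (x j) \<le> 1) \<Longrightarrow> norm (pgrad sel w x) \<le> 1"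
  using pgrad_cases[of sel w x] by auto

lemma abs_net_le:
  assumes "\<And>i. i \<in> {1..k} \<Longrightarrow> \<bar>a i\<bar> \<le> 1 \<and> norm (W i) \<le> B"
    and "\<And>j. norm (x j) \<le> 1"
  shows "\<bar>net k W a x\<bar> \<le> k * B"
proof -
  have "\<bar>net k W a x\<bar> \<le> (\<Sum>i\<in>{1..k}. \<bar>a i * neuron (W i) x\<bar>)"
    unfolding net_def by (rule sum_abs)
  also have "\<dots> = (\<Sum>i\<in>{1..k}. \<bar>a i\<bar> * neuron (W i) x)"
    by (simp add: abs_mult neuron_nonneg)
  also have "\<dots> \<le> (\<Sum>i\<in>{1..k}. B)"
  proof (rule sum_mono)
    fix i assume "i \<in> {1..k}"
    then have "\<bar>a i\<bar> \<le> 1" "neuron (W i) x \<le> B"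
      using assms neuron_le_norm[of x "W i"] by force+
    then show "\<bar>a i\<bar> * neuron (W i) x \<le> B"
      using neuron_nonneg mult_mono[of "\<bar>a i\<bar>" 1 "neuron (W i) x" B] by force
  qed
  finally show ?thesis by simp
qed

definition unit_samples :: "(('n \<Rightarrow> 'a::real_normed_vector) \<times> real) set \<Rightarrow> bool" where
  "unit_samples S \<longleftrightarrow> (\<forall>(x, y)\<in>S. \<bar>y\<bar> \<le> 1 \<and> (\<forall>j. norm (x j) \<le> 1))"

lemma norm_grad1_le:
  assumes S: "unit_samples S" and a: "\<bar>a i\<bar> \<le> 1"
  shows "norm (grad1 sel k S W a i) \<le> 1"
proof -
  have "norm (\<Sum>(x, y)\<in>S. (logloss' (y * net k W a x) * y * a i) *\<^sub>R pgrad sel (W i) x)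
      \<le> (\<Sum>(x, y)\<in>S. 1)"
    unfolding case_prod_beta
  proof (rule order_trans[OF norm_sum sum_mono])
    fix p assume "p \<in> S"
    then have "\<bar>snd p\<bar> \<le> 1" "norm (pgrad sel (W i) (fst p)) \<le> 1"
      using S norm_pgrad_le unfolding unit_samples_def by (force simp: case_prod_beta)+
    then show "norm ((logloss' (snd p * net k W a (fst p)) * snd p * a i) *\<^sub>R pgrad sel (W i) (fst p)) \<le> 1"
      using abs_logloss'_le_one a
      by (auto simp: abs_mult intro!: mult_le_one)
  qed
  then show ?thesis
    unfolding grad1_def by (cases "card S = 0") (auto simp: divide_simps)
qed

lemma norm_gd_le:
  assumes "unit_samples S" "\<bar>a i\<bar> \<le> 1" "0 \<le> eta"
  shows "norm (gd sel k S eta W0 a t i) \<le> norm (W0 i) + eta * t"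
proof (induction t)
  case (Suc t)
  have "norm (gd sel k S eta W0 a (Suc t) i)
      \<le> norm (gd sel k S eta W0 a t i) + eta * norm (grad1 sel k S (gd sel k S eta W0 a t) a i)"
    using assms(3) by (simp add: norm_triangle_le_diff)
  also have "\<dots> \<le> norm (gd sel k S eta W0 a t i) + eta"
    using norm_grad1_le[OF assms(1), of a i sel k "gd sel k S eta W0 a t"] assms(2,3) by (simp add: mult_left_le)
  finally show ?case using Suc by (simp add: algebra_simps)
qed simp

lemma inner_gd_Suc:
  "gd sel k S eta W0 a (Suc t) i \<bullet> v = gd sel k S eta W0 a t i \<bullet> v
     - eta / card S * (\<Sum>(x, y)\<in>S. logloss' (y * net k (gd sel k S eta W0 a t) a x) * y * a i
                                      * (pgrad sel (gd sel k S eta W0 a t i) x \<bullet> v))"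
  by (simp add: grad1_def inner_diff_left inner_sum_left case_prod_beta algebra_simps)

lemma sum_label_indicator:
  fixes c :: real
  assumes "finite S"
  shows "(\<Sum>(x, y)\<in>S. if y = s then c else 0) = c * card {x. (x, s) \<in> S}"
proof -
  have "{p \<in> S. snd p = s} = (\<lambda>x. (x, s)) ` {x. (x, s) \<in> S}" by force
  then have "card {p \<in> S. snd p = s} = card {x. (x, s) \<in> S}"
    by (simp add: card_image inj_on_def)
  then show ?thesis
    using sum.inter_filter[OF assms, of "\<lambda>_. c" "\<lambda>p. snd p = s"]
    by (simp add: case_prod_beta mult.commute)
qed

section \<open>The readout vector\<close>

lemma sum_vstar_mult:
  assumes "P \<subseteq> {1..k}" "N \<subseteq> {1..k}" "P \<inter> N = {}"
  shows "(\<Sum>i\<in>{1..k}. vstar k d eta T P N i * f i) = 80 * real d / (real k * eta * real T) * (sum f P - sum f N)"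
proof -
  have "(\<Sum>i\<in>{1..k}. vstar k d eta T P N i * f i)
      = (\<Sum>i\<in>{1..k}. (if i \<in> P then 80 * real d / (real k * eta * real T) * f i else 0)
                   - (if i \<in> N then 80 * real d / (real k * eta * real T) * f i else 0))"
    using assms(3) by (intro sum.cong) (auto simp: vstar_def)
  also have "\<dots> = 80 * real d / (real k * eta * real T) * (sum f P - sum f N)"
    using assms(1,2) by (simp add: sum_subtractf sum.If_cases Int_absorb1 sum_distrib_left
        right_diff_distrib)
  finally show ?thesis .
qed

lemma sum_vstar_sq:
  assumes "P \<subseteq> {1..k}" "N \<subseteq> {1..k}" "P \<inter> N = {}"
  shows "(\<Sum>i\<in>{1..k}. (vstar k d eta T P N i)^2)
       = (80 * real d / (real k * eta * real T))^2 * (card P + card N)"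
proof -
  define V where "V = 80 * real d / (real k * eta * real T)"
  have "sum (vstar k d eta T P N) P = card P * V"
    by (simp add: vstar_def V_def)
  moreover have "sum (vstar k d eta T P N) N = (\<Sum>i\<in>N. - V)"
    using assms(3) by (intro sum.cong) (auto simp: vstar_def V_def)
  moreover have "(\<Sum>i\<in>{1..k}. (vstar k d eta T P N i)^2)
      = V * (sum (vstar k d eta T P N) P - sum (vstar k d eta T P N) N)"
    unfolding power2_eq_square V_def by (rule sum_vstar_mult[OF assms])
  ultimately show ?thesis
    unfolding V_def[symmetric] by (simp add: power2_eq_square algebra_simps)
qed

section \<open>The support of the distribution\<close>

definition signal :: "real \<Rightarrow> nat" where
  "signal y = (if y = 1 then 1 else 2)"

lemma signal_eq_iff:
  "y \<in> {1, -1} \<Longrightarrow> y' \<in> {1, -1} \<Longrightarrow> signal y = signal y' \<longleftrightarrow> y = y'"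
  unfolding signal_def by auto

lemma supportD_E:
  assumes "(x, y) \<in> supportD ob d"
  obtains jp where "y \<in> {1, -1}" "x jp = ob (signal y)" "\<And>j. j \<noteq> jp \<Longrightarrow> x j \<in> ob ` {3..d}"
  using assms unfolding supportD_def signal_def by auto

locale orthonormal_patches =
  fixes ob :: "nat \<Rightarrow> 'a::real_inner" and d :: nat
  assumes d3: "3 \<le> d"
    and orth: "\<forall>i\<in>{1..d}. \<forall>j\<in>{1..d}. ob i \<bullet> ob j = (if i = j then 1 else 0)"
begin

lemma inner_ob: "i \<in> {1..d} \<Longrightarrow> j \<in> {1..d} \<Longrightarrow> ob i \<bullet> ob j = (if i = j then 1 else 0)"
  using orth by blast

lemma norm_ob: "l \<in> {1..d} \<Longrightarrow> norm (ob l) = 1"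
  using inner_ob[of l l] by (simp add: norm_eq_sqrt_inner)

lemma signal_mem: "signal y \<in> {1..d}"
  using d3 unfolding signal_def by auto

lemma supportD_patch:
  assumes "(x, y) \<in> supportD ob d"
  obtains l where "l \<in> {1..d}" "x j = ob l"
proof -
  obtain jp where jp: "x jp = ob (signal y)" "\<And>j. j \<noteq> jp \<Longrightarrow> x j \<in> ob ` {3..d}"
    using supportD_E[OF assms] by blast
  show thesis
  proof (cases "j = jp")
    case True then show thesis using that signal_mem jp by blast
  next
    case False
    then obtain l where "l \<in> {3..d}" "x j = ob l" using jp(2) by blast
    then show thesis using that[of l] by simp
  qed
qed

lemma supportD_label: "(x, y) \<in> supportD ob d \<Longrightarrow> y \<in> {1, -1}"
  by (rule supportD_E)

lemma norm_supportD_patch: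
  assumes "(x, y) \<in> supportD ob d" shows "norm (x j) = 1"
proof -
  obtain l where "l \<in> {1..d}" "x j = ob l" using supportD_patch[OF assms] .
  then show ?thesis by (simp add: norm_ob)
qed

lemma supportD_unit_samples: "S \<subseteq> supportD ob d \<Longrightarrow> unit_samples S"
  unfolding unit_samples_def using supportD_label norm_supportD_patch by fastforce

definition prefers :: "'a \<Rightarrow> nat \<Rightarrow> bool" where
  "prefers w c \<longleftrightarrow> 0 < w \<bullet> ob c \<and> (\<forall>l\<in>{3..d}. w \<bullet> ob l < w \<bullet> ob c)"

lemma W0set_eq: "W0set k W d ob c = {i\<in>{1..k}. prefers (W i) c}"
  unfolding W0set_def prefers_def by auto

lemma pgrad_eq_signal:
  assumes s: "(x, y) \<in> supportD ob d" and w: "prefers w (signal y)"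
    and sel: "\<And>j. w \<bullet> x j \<le> w \<bullet> x (sel w x)"
  shows "pgrad sel w x = ob (signal y)"
proof -
  obtain jp where jp: "x jp = ob (signal y)" "\<And>j. j \<noteq> jp \<Longrightarrow> x j \<in> ob ` {3..d}"
    using supportD_E[OF s] by blast
  have "sel w x = jp"
  proof (rule ccontr)
    assume "sel w x \<noteq> jp"
    then obtain l where "l \<in> {3..d}" "x (sel w x) = ob l" using jp by blast
    then show False using sel[of jp] jp w unfolding prefers_def by fastforce
  qed
  then show ?thesis unfolding pgrad_def using jp w unfolding prefers_def by simp
qed

lemma inner_pgrad_ob_nonneg:
  assumes "(x, y) \<in> supportD ob d" "l \<in> {1..d}"
  shows "0 \<le> pgrad sel w x \<bullet> ob l"
proof (cases "pgrad sel w x = 0")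
  case False
  then obtain j where "pgrad sel w x = x j" using pgrad_cases[of sel w x] by auto
  moreover obtain q where "q \<in> {1..d}" "x j = ob q" using assms(1) by (rule supportD_patch)
  ultimately show ?thesis using inner_ob[of q l] assms(2) by simp
qed simp

lemma inner_pgrad_ob_other_signal:
  assumes s: "(x, y) \<in> supportD ob d" and c: "c \<in> {1, 2}" "c \<noteq> signal y"
  shows "pgrad sel w x \<bullet> ob c = 0"
proof -
  obtain jp where jp: "x jp = ob (signal y)" "\<And>j. j \<noteq> jp \<Longrightarrow> x j \<in> ob ` {3..d}"
    using supportD_E[OF s] by blast
  have cd: "c \<in> {1..d}" using d3 c by auto
  have "x j \<bullet> ob c = 0" for j
  proof (cases "j = jp")
    case True then show ?thesis using jp inner_ob[OF signal_mem cd] c by simp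
  next
    case False
    then obtain l where "l \<in> {3..d}" "x j = ob l" using jp by blast
    then show ?thesis using inner_ob[of l c] cd c by auto
  qed
  then show ?thesis using pgrad_cases[of sel w x] by auto
qed

end

section \<open>The first training phase\<close>

locale first_phase = orthonormal_patches ob d
  for ob :: "nat \<Rightarrow> 'a::real_inner" and d :: nat +
  fixes k T1 :: nat and S1 :: "(('n::finite \<Rightarrow> 'a) \<times> real) set"
    and sel :: "'a \<Rightarrow> ('n \<Rightarrow> 'a) \<Rightarrow> 'n"
    and W0 :: "nat \<Rightarrow> 'a" and a :: "nat \<Rightarrow> real" and eta1 r :: real
  assumes sel_max: "\<And>w x j. w \<bullet> x j \<le> w \<bullet> x (sel w x)"
    and S1_fin: "finite S1" and S1_ne: "S1 \<noteq> {}" and S1_supp: "S1 \<subseteq> supportD ob d"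
    and S1_balanced: "\<And>y. y \<in> {1, -1} \<Longrightarrow> real (card S1) / 3 \<le> card {x. (x, y) \<in> S1}"
    and init_norm: "\<And>i. i \<in> {1..k} \<Longrightarrow> norm (W0 i) = r"
    and init_a: "\<And>i. i \<in> {1..k} \<Longrightarrow> a i \<in> {1, -1}"
    and T1: "1 \<le> T1"
    and eta1: "eta1 \<le> 1 / (4 * real k * (real T1 + 1))"
    and r: "0 < r" "r \<le> eta1 / 200"
begin

abbreviation W :: "nat \<Rightarrow> nat \<Rightarrow> 'a" where
  "W \<equiv> gd sel k S1 eta1 W0 a"

definition good_neurons :: "real \<Rightarrow> nat set" where
  "good_neurons y = W0set k W0 d ob (signal y) \<inter> Aset k a y"

lemma good_neuronsD:
  "i \<in> good_neurons s \<Longrightarrow> i \<in> {1..k} \<and> a i = s \<and> prefers (W0 i) (signal s)"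
  unfolding good_neurons_def W0set_eq Aset_def by auto

lemma eta1_pos: "0 < eta1"
  using r by linarith

lemma k_pos: "0 < k"
  using eta1 eta1_pos by (cases k) auto

lemma eta1_scaled: "eta1 * (4 * real k * (real T1 + 1)) \<le> 1"
proof -
  have "0 < 4 * real k * (real T1 + 1)" using k_pos by simp
  from pos_le_divide_eq[OF this, of eta1 1] show ?thesis using eta1 by blast
qed

lemma abs_a_le_one: "i \<in> {1..k} \<Longrightarrow> \<bar>a i\<bar> \<le> 1"
  using init_a by fastforce

lemma net_W_le_quarter:
  assumes s: "(x, y) \<in> supportD ob d" and t: "t < T1"
  shows "y * net k (W t) a x \<le> 1/4"
proof -
  have "norm (W t i) \<le> r + eta1 * T1" if "i \<in> {1..k}" for i
  proof -
    have "norm (W t i) \<le> r + eta1 * t"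
      using norm_gd_le[OF supportD_unit_samples[OF S1_supp], of a i eta1 sel k W0 t] abs_a_le_one[OF that]
        init_norm[OF that] eta1_pos by simp
    also have "\<dots> \<le> r + eta1 * T1" using t eta1_pos by simp
    finally show ?thesis .
  qed
  then have "\<bar>net k (W t) a x\<bar> \<le> k * (r + eta1 * T1)"
    using abs_a_le_one norm_supportD_patch[OF s] by (intro abs_net_le) auto
  also have "\<dots> \<le> k * (eta1 * (T1 + 1))"
    using r by (intro mult_left_mono) (auto simp: algebra_simps)
  also have "\<dots> \<le> 1/4"
    using eta1_scaled by (simp add: algebra_simps)
  finally show ?thesis
    using supportD_label[OF s] by auto
qed

lemma inner_W_Suc_signal_ge:
  assumes i: "i \<in> {1..k}" "a i = s" "s \<in> {1, -1}" and w: "prefers (W t i) (signal s)"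
    and t: "t < T1"
  shows "W t i \<bullet> ob (signal s) + eta1 / 12 \<le> W (Suc t) i \<bullet> ob (signal s)"
proof -
  let ?c = "signal s"
  let ?term = "\<lambda>x y. logloss' (y * net k (W t) a x) * y * a i * (pgrad sel (W t i) x \<bullet> ob ?c)"
  have "?term x y \<le> (if y = s then - 1/4 else 0)" if "(x, y) \<in> S1" for x y
  proof -
    have xy: "(x, y) \<in> supportD ob d" using that S1_supp by blast
    have y: "y \<in> {1, -1}" using supportD_label[OF xy] .
    show ?thesis
    proof (cases "y = s")
      case True
      then have "pgrad sel (W t i) x = ob ?c"
        using pgrad_eq_signal[OF xy] w sel_max by blast
      then show ?thesis
        using True i logloss'_le_neg_quarter[OF net_W_le_quarter[OF xy t]]
          inner_ob[OF signal_mem signal_mem] by auto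
    next
      case False
      then have "signal y \<noteq> ?c" using signal_eq_iff y i(3) by blast
      then show ?thesis
        using False inner_pgrad_ob_other_signal[OF xy] by (simp add: signal_def)
    qed
  qed
  then have "(\<Sum>(x, y)\<in>S1. ?term x y) \<le> (\<Sum>(x, y)\<in>S1. if y = s then - 1/4 else 0)"
    by (intro sum_mono) auto
  also have "\<dots> \<le> - real (card S1) / 12"
    using sum_label_indicator[OF S1_fin] S1_balanced[OF i(3)] by simp
  finally have "eta1 / card S1 * (\<Sum>(x, y)\<in>S1. ?term x y) \<le> eta1 / card S1 * (- real (card S1) / 12)"
    using eta1_pos by (intro mult_left_mono) auto
  also have "\<dots> = - eta1 / 12"
    using S1_fin S1_ne by simp
  finally show ?thesis
    unfolding inner_gd_Suc by linarith
qed

lemma inner_W_Suc_other_le: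
  assumes i: "i \<in> {1..k}" "a i = s" "s \<in> {1, -1}" and w: "prefers (W t i) (signal s)"
    and l: "l \<in> {1..d}" "l \<noteq> signal s"
  shows "W (Suc t) i \<bullet> ob l \<le> W t i \<bullet> ob l"
proof -
  let ?term = "\<lambda>x y. logloss' (y * net k (W t) a x) * y * a i * (pgrad sel (W t i) x \<bullet> ob l)"
  have "0 \<le> ?term x y" if "(x, y) \<in> S1" for x y
  proof -
    have xy: "(x, y) \<in> supportD ob d" using that S1_supp by blast
    have y: "y \<in> {1, -1}" using supportD_label[OF xy] .
    show ?thesis
    proof (cases "y = s")
      case True
      then have "pgrad sel (W t i) x = ob (signal s)"
        using pgrad_eq_signal[OF xy] w sel_max by blast
      then show ?thesis using inner_ob[OF signal_mem l(1)] l(2) by simp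
    next
      case False
      then have "y * a i = -1" using y i by auto
      then have "?term x y = - logloss' (y * net k (W t) a x) * (pgrad sel (W t i) x \<bullet> ob l)"
        by (simp add: mult.assoc)
      then show ?thesis
        using mult_nonpos_nonneg[OF logloss'_nonpos inner_pgrad_ob_nonneg[OF xy l(1)]] by simp
    qed
  qed
  then have "0 \<le> eta1 / card S1 * (\<Sum>(x, y)\<in>S1. ?term x y)"
    using eta1_pos by (intro mult_nonneg_nonneg sum_nonneg) auto
  then show ?thesis
    unfolding inner_gd_Suc by simp
qed

lemma good_neuron_dynamics:
  assumes i: "i \<in> good_neurons s" and t: "t \<le> T1"
  shows "W0 i \<bullet> ob (signal s) + eta1 * t / 12 \<le> W t i \<bullet> ob (signal s)
    \<and> (\<forall>l\<in>{1..d}. l \<noteq> signal s \<longrightarrow> W t i \<bullet> ob l \<le> W0 i \<bullet> ob l)"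
  using t
proof (induction t)
  case (Suc t)
  have i': "i \<in> {1..k}" "a i = s" "s \<in> {1, -1}" "prefers (W0 i) (signal s)"
    using good_neuronsD[OF i] init_a by auto
  from Suc have signal_ge: "W0 i \<bullet> ob (signal s) + eta1 * t / 12 \<le> W t i \<bullet> ob (signal s)"
    and other_le: "\<forall>l\<in>{1..d}. l \<noteq> signal s \<longrightarrow> W t i \<bullet> ob l \<le> W0 i \<bullet> ob l" by auto
  have "prefers (W t i) (signal s)"
    unfolding prefers_def
  proof (intro conjI ballI)
    have "0 \<le> eta1 * t / 12" using eta1_pos by simp
    then show "0 < W t i \<bullet> ob (signal s)"
      using i'(4) signal_ge unfolding prefers_def by linarith
    fix l assume l: "l \<in> {3..d}"
    then have "l \<in> {1..d}" "l \<noteq> signal s" unfolding signal_def by auto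
    then have "W t i \<bullet> ob l \<le> W0 i \<bullet> ob l" using other_le by blast
    moreover have "W0 i \<bullet> ob l < W0 i \<bullet> ob (signal s)" using i'(4) l unfolding prefers_def by blast
    ultimately show "W t i \<bullet> ob l < W t i \<bullet> ob (signal s)"
      using signal_ge \<open>0 \<le> eta1 * t / 12\<close> by linarith
  qed
  then have step_signal: "W t i \<bullet> ob (signal s) + eta1 / 12 \<le> W (Suc t) i \<bullet> ob (signal s)"
    and step_other: "\<forall>l\<in>{1..d}. l \<noteq> signal s \<longrightarrow> W (Suc t) i \<bullet> ob l \<le> W t i \<bullet> ob l"
    using inner_W_Suc_signal_ge[OF i'(1-3)] inner_W_Suc_other_le[OF i'(1-3)] Suc.prems by auto
  show ?case
  proof (intro conjI ballI impI)
    have "eta1 * real (Suc t) / 12 = eta1 * t / 12 + eta1 / 12"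
      by (simp add: algebra_simps)
    then show "W0 i \<bullet> ob (signal s) + eta1 * real (Suc t) / 12 \<le> W (Suc t) i \<bullet> ob (signal s)"
      using signal_ge step_signal by linarith
    fix l assume "l \<in> {1..d}" "l \<noteq> signal s"
    then show "W (Suc t) i \<bullet> ob l \<le> W0 i \<bullet> ob l"
      using step_other other_le by (meson order_trans)
  qed
qed simp

lemma neuron_good_ge:
  assumes s: "(x, y) \<in> supportD ob d" and i: "i \<in> good_neurons y"
  shows "eta1 * T1 / 12 \<le> neuron (W T1 i) x"
proof -
  obtain jp where jp: "x jp = ob (signal y)" using supportD_E[OF s] by blast
  have "0 < W0 i \<bullet> ob (signal y)" using good_neuronsD[OF i] unfolding prefers_def by blast
  then have "eta1 * T1 / 12 \<le> W T1 i \<bullet> ob (signal y)"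
    using good_neuron_dynamics[OF i order_refl] by linarith
  also have "\<dots> = W T1 i \<bullet> x jp" using jp by simp
  also have "\<dots> \<le> neuron (W T1 i) x"
    using relu_le_neuron[of "W T1 i" x jp] unfolding relu_def by linarith
  finally show ?thesis .
qed

lemma neuron_good_opposite_le:
  assumes s: "(x, y) \<in> supportD ob d" and i: "i \<in> good_neurons (- y)"
  shows "neuron (W T1 i) x \<le> r"
proof (rule neuron_le)
  fix j
  obtain jp where y: "y \<in> {1, -1}" and jp: "x jp = ob (signal y)"
    and other: "\<And>j. j \<noteq> jp \<Longrightarrow> x j \<in> ob ` {3..d}"
    using supportD_E[OF s] by blast
  obtain l where l: "l \<in> {1..d}" "l \<noteq> signal (- y)" "x j = ob l"
  proof (cases "j = jp")
    case True
    then show thesis using that[OF signal_mem] jp y signal_eq_iff[of y "- y"] by auto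
  next
    case False
    then obtain l where "l \<in> {3..d}" "x j = ob l" using other by blast
    then show thesis using that[of l] by (auto simp: signal_def)
  qed
  have "W T1 i \<bullet> x j \<le> W0 i \<bullet> ob l"
    using good_neuron_dynamics[OF i order_refl] l by auto
  also have "\<dots> \<le> norm (W0 i) * norm (ob l)" by (rule norm_cauchy_schwarz)
  also have "\<dots> = r" using init_norm good_neuronsD[OF i] norm_ob[OF l(1)] by simp
  finally show "relu (W T1 i \<bullet> x j) \<le> r" using r unfolding relu_def by simp
qed

lemma good_neurons_subset: "good_neurons y \<subseteq> {1..k}"
  using good_neuronsD by blast

lemma good_neurons_disjoint: "good_neurons 1 \<inter> good_neurons (-1) = {}"
  unfolding good_neurons_def Aset_def by auto

lemma margin_good_neurons:
  assumes s: "(x, y) \<in> supportD ob d"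
    and card_y: "real k / (4 * real d) \<le> card (good_neurons y)"
    and card_opp: "card (good_neurons (- y)) \<le> real k / real d"
  shows "1 < 80 * real d / (real k * eta1 * real T1) *
      ((\<Sum>i\<in>good_neurons y. neuron (W T1 i) x) - (\<Sum>i\<in>good_neurons (- y). neuron (W T1 i) x))"
proof -
  define V where "V = 80 * real d / (real k * eta1 * real T1)"
  have pos: "0 < real d" "0 < real k" "1 \<le> real T1" using d3 k_pos T1 by auto
  then have "0 < V" unfolding V_def using eta1_pos by simp
  have "real k / (4 * real d) * (eta1 * T1 / 12) \<le> card (good_neurons y) * (eta1 * T1 / 12)"
    using card_y eta1_pos by (intro mult_right_mono) auto
  also have "\<dots> \<le> (\<Sum>i\<in>good_neurons y. neuron (W T1 i) x)"
    using sum_mono[of "good_neurons y" "\<lambda>_. eta1 * T1 / 12"] neuron_good_ge[OF s] by simp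
  finally have lower: "V * (real k / (4 * real d) * (eta1 * T1 / 12))
      \<le> V * (\<Sum>i\<in>good_neurons y. neuron (W T1 i) x)"
    using \<open>0 < V\<close> by (intro mult_left_mono) auto
  have "(\<Sum>i\<in>good_neurons (- y). neuron (W T1 i) x) \<le> card (good_neurons (- y)) * r"
    using sum_mono[of "good_neurons (- y)" _ "\<lambda>_. r"] neuron_good_opposite_le[OF s] by simp
  also have "\<dots> \<le> real k / real d * r"
    using card_opp r by (intro mult_right_mono) auto
  finally have upper: "V * (\<Sum>i\<in>good_neurons (- y). neuron (W T1 i) x) \<le> V * (real k / real d * r)"
    using \<open>0 < V\<close> by (intro mult_left_mono) auto
  have "V * (real k / (4 * real d) * (eta1 * T1 / 12)) = 5 / 3"
    unfolding V_def using pos eta1_pos by (simp add: field_simps)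
  moreover have "V * (real k / real d * r) \<le> 2 / 5"
  proof -
    have "V * (real k / real d * r) = 80 * r / (eta1 * T1)"
      unfolding V_def using pos eta1_pos by (simp add: field_simps)
    also have "\<dots> \<le> 80 * r / eta1"
      using pos eta1_pos r by (intro divide_left_mono) auto
    also have "\<dots> \<le> 2 / 5"
      using r eta1_pos by (simp add: divide_simps)
    finally show ?thesis .
  qed
  ultimately have "1 < V * (\<Sum>i\<in>good_neurons y. neuron (W T1 i) x)
      - V * (\<Sum>i\<in>good_neurons (- y). neuron (W T1 i) x)"
    using lower upper by linarith
  then show ?thesis
    unfolding V_def[symmetric] by (simp add: right_diff_distrib)
qed

definition readout :: "nat \<Rightarrow> real" where
  "readout = vstar k d eta1 T1 (good_neurons 1) (good_neurons (-1))"

lemmas readout_split = good_neurons_subset good_neurons_subset good_neurons_disjoint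

lemma readout_margin:
  assumes card_good: "\<And>y. y \<in> {1, -1} \<Longrightarrow>
      real k / (4 * real d) \<le> card (good_neurons y) \<and> card (good_neurons y) \<le> real k / real d"
    and s: "(x, y) \<in> supportD ob d"
  shows "1 < y * (\<Sum>i\<in>{1..k}. readout i * neuron (W T1 i) x)"
proof -
  let ?margin = "\<lambda>y. (\<Sum>i\<in>good_neurons y. neuron (W T1 i) x)"
  have y: "y \<in> {1, -1}" by (rule supportD_label[OF s])
  then have "y * (?margin 1 - ?margin (-1)) = ?margin y - ?margin (- y)"
    by auto
  moreover have "- y \<in> {1, -1}" using y by auto
  ultimately show ?thesis
    unfolding readout_def sum_vstar_mult[OF readout_split] mult.left_commute[of y]
    using margin_good_neurons[OF s] card_good[OF y] card_good[of "- y"] by simp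
qed

lemma sum_sq_readout_le:
  assumes "\<And>y. y \<in> {1, -1} \<Longrightarrow> card (good_neurons y) \<le> real k / real d"
  shows "(\<Sum>i\<in>{1..k}. (readout i)^2) \<le> 2 * 80^2 * real d / (real k * eta1^2 * real T1^2)"
proof -
  have "real (card (good_neurons 1) + card (good_neurons (-1))) \<le> 2 * (real k / real d)"
    using assms[of 1] assms[of "-1"] by simp
  then have "(80 * real d / (real k * eta1 * real T1))^2 * (card (good_neurons 1) + card (good_neurons (-1)))
      \<le> (80 * real d / (real k * eta1 * real T1))^2 * (2 * (real k / real d))"
    by (intro mult_left_mono) auto
  also have "\<dots> = 2 * 80^2 * real d / (real k * eta1^2 * real T1^2)"
    using d3 k_pos eta1_pos T1 by (simp add: field_simps power2_eq_square)
  finally show ?thesis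
    unfolding readout_def sum_vstar_sq[OF readout_split] .
qed

end

theorem mainTheorem9:
  fixes ob :: "nat \<Rightarrow> 'a::euclidean_space"
    and d k T1 :: nat
    and S1 :: "(('n::finite \<Rightarrow> 'a) \<times> real) set"
    and sel :: "'a \<Rightarrow> ('n \<Rightarrow> 'a) \<Rightarrow> 'n"
    and W0 :: "nat \<Rightarrow> 'a" and a :: "nat \<Rightarrow> real"
    and eta1 r :: real
  assumes d_def: "d = DIM('a)" and d3: "d \<ge> 3"
    and orth: "\<forall>i\<in>{1..d}. \<forall>j\<in>{1..d}. ob i \<bullet> ob j = (if i = j then 1 else 0)"
    and sel_max: "\<forall>w x j. w \<bullet> x j \<le> w \<bullet> x (sel w x)"
    and S1_fin: "finite S1" and S1_ne: "S1 \<noteq> {}" and S1_supp: "S1 \<subseteq> supportD ob d"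
    and init_norm: "\<forall>i\<in>{1..k}. norm (W0 i) = r"
    and init_a: "\<forall>i\<in>{1..k}. a i = 1 \<or> a i = -1"
    and T1: "T1 \<ge> 1"
    and eta1: "eta1 \<le> 1 / (4 * real k * (real T1 + 1))"
    and r: "0 < r" "r \<le> eta1 / 200"
    and cardp: "real k / (4 * real d) \<le> real (card (W0set k W0 d ob 1 \<inter> Aset k a 1))"
               "real (card (W0set k W0 d ob 1 \<inter> Aset k a 1)) \<le> real k / real d"
    and cardm: "real k / (4 * real d) \<le> real (card (W0set k W0 d ob 2 \<inter> Aset k a (-1)))"
               "real (card (W0set k W0 d ob 2 \<inter> Aset k a (-1))) \<le> real k / real d"
    and Sp: "real (card {x. (x, 1) \<in> S1}) \<ge> real (card S1) / 3"
    and Sm: "real (card {x. (x, -1) \<in> S1}) \<ge> real (card S1) / 3"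
  shows "(\<forall>(x, y)\<in>(supportD ob d :: (('n \<Rightarrow> 'a) \<times> real) set).
            y * (\<Sum>i\<in>{1..k}. vstar k d eta1 T1 (W0set k W0 d ob 1 \<inter> Aset k a 1)
                                   (W0set k W0 d ob 2 \<inter> Aset k a (-1)) i
                              * neuron (gd sel k S1 eta1 W0 a T1 i) x) > 1)
       \<and> (\<Sum>i\<in>{1..k}. (vstar k d eta1 T1 (W0set k W0 d ob 1 \<inter> Aset k a 1)
                                   (W0set k W0 d ob 2 \<inter> Aset k a (-1)) i)^2)
           \<le> 2 * 80^2 * real d / (real k * eta1^2 * real T1^2)"
proof -
  interpret first_phase ob d k T1 S1 sel W0 a eta1 r
    using d3 orth sel_max S1_fin S1_ne S1_supp init_norm init_a T1 eta1 r Sp Sm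
    by unfold_locales auto
  have P: "W0set k W0 d ob 1 \<inter> Aset k a 1 = good_neurons 1"
    and N: "W0set k W0 d ob 2 \<inter> Aset k a (-1) = good_neurons (-1)"
    unfolding good_neurons_def signal_def by simp_all
  have "real k / (4 * real d) \<le> card (good_neurons y) \<and> card (good_neurons y) \<le> real k / real d"
    if "y \<in> {1, -1}" for y
    using that cardp cardm unfolding P N by auto
  then show ?thesis
    using readout_margin sum_sq_readout_le unfolding P N readout_def by blast
qed

end
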